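(* The flat braid group $\mathrm{FB}_7$ is (abstractly) commensurable to the right-angled Artin group $A(P_4)$, i.e.\ they contain isomorphic finite-index subgroups.
   Context: $\mathrm{FB}_7=\langle \sigma_1,\ldots,\sigma_6\mid \sigma_i^2=1,\ [\sigma_i,\sigma_j]=1 \text{ whenever } |i-j|\ge 2\rangle$. $P_4$ denotes the path of length $4$ (five vertices $v_0,\dots,v_4$, with $v_i$ adjacent to $v_{i+1}$), and $A(P_4)=\langle v_0,\ldots,v_4\mid [v_i,v_{i+1}]=1,\ 0\le i\le 3\rangle$ is the corresponding right-angled Artin group. *)

theory Defs
  imports "HOL-Algebra.Algebra"
begin

text \<open>A letter is a generator together with a flag; (x, False) stands for x and
(x, True) for the inverse of x.  Words are lists of letters.\<close>

type_synonym 'a pword = "('a \<times> bool) list"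

definition inv_letter :: "'a \<times> bool \<Rightarrow> 'a \<times> bool" where
  "inv_letter a = (fst a, \<not> snd a)"

definition inv_pword :: "'a pword \<Rightarrow> 'a pword" where
  "inv_pword w = rev (map inv_letter w)"

inductive pres_eq :: "'a pword set \<Rightarrow> 'a pword \<Rightarrow> 'a pword \<Rightarrow> bool" for R where
  pres_refl: "pres_eq R w w"
| pres_sym: "pres_eq R u v \<Longrightarrow> pres_eq R v u"
| pres_trans: "pres_eq R u v \<Longrightarrow> pres_eq R v w \<Longrightarrow> pres_eq R u w"
| pres_cancel: "pres_eq R (u @ [a, inv_letter a] @ v) (u @ v)"
| pres_rel: "r \<in> R \<Longrightarrow> pres_eq R (u @ r @ v) (u @ v)"

definition gen_words :: "'a set \<Rightarrow> 'a pword set" where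
  "gen_words S = lists (S \<times> UNIV)"

definition pres_class :: "'a set \<Rightarrow> 'a pword set \<Rightarrow> 'a pword \<Rightarrow> 'a pword set" where
  "pres_class S R w = {v \<in> gen_words S. pres_eq R w v}"

definition pres_group :: "'a set \<Rightarrow> 'a pword set \<Rightarrow> 'a pword set monoid" where
  "pres_group S R =
     \<lparr> carrier = pres_class S R ` gen_words S,
       monoid.mult = (\<lambda>A B. {w \<in> gen_words S. \<exists>u\<in>A. \<exists>v\<in>B. pres_eq R w (u @ v)}),
       one = pres_class S R [] \<rparr>"

definition commutator_word :: "'a \<Rightarrow> 'a \<Rightarrow> 'a pword" where
  "commutator_word x y = [(x, False), (y, False), (x, True), (y, True)]"

text \<open>FB_7 = \<langle>\<sigma>_1..\<sigma>_6 | \<sigma>_i^2, [\<sigma>_i,\<sigma>_j] for |i-j| \<ge> 2\<rangle>; generator \<sigma>_i is i.\<close>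
definition FB7 :: "nat pword set monoid" where
  "FB7 = pres_group {1..6}
     ({[(i, False), (i, False)] | i. i \<in> {1..6}} \<union>
      {commutator_word i j | i j. i \<in> {1..6} \<and> j \<in> {1..6} \<and> (i + 2 \<le> j \<or> j + 2 \<le> i)})"

text \<open>A(P_4) = \<langle>v_0..v_4 | [v_i, v_{i+1}], 0 \<le> i \<le> 3\<rangle>; generator v_i is i.\<close>
definition AP4 :: "nat pword set monoid" where
  "AP4 = pres_group {0..4} {commutator_word i (i + 1) | i. i \<in> {0..3}}"

definition commensurable :: "('a, 'c) monoid_scheme \<Rightarrow> ('b, 'd) monoid_scheme \<Rightarrow> bool" where
  "commensurable G K \<longleftrightarrow>
     (\<exists>H H'. subgroup H G \<and> finite (rcosets\<^bsub>G\<^esub> H) \<and>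
             subgroup H' K \<and> finite (rcosets\<^bsub>K\<^esub> H') \<and>
             G\<lparr>carrier := H\<rparr> \<cong> K\<lparr>carrier := H'\<rparr>)"

end

theory Submission
  imports Defs
begin

text \<open>
  Both groups act on finite sets through parities of exponent sums of words, every generator
  acting as an involution: \<open>FB\<^sub>7\<close> on \<open>(\<int>/2)\<^sup>5\<close> and \<open>A(P\<^sub>4)\<close> on \<open>\<int>/2\<close>. The stabilizers
  of a point have index 32 and 2. Fix transversals and assign to every Schreier generator of
  either stabilizer an explicit word in the generators of the other stabilizer. Then
  Reidemeister-Schreier rewriting gives maps between the two stabilizers in both directions. Finite
  computations show that relators are sent to trivial words, and that rewriting back the word
  assigned to a Schreier generator returns that Schreier generator. So the two maps are mutually
  inverse isomorphisms.
\<close>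

lemma inv_letter_pair [simp]: "inv_letter (x, b) = (x, \<not> b)"
  by (simp add: inv_letter_def)

lemma fst_inv_letter [simp]: "fst (inv_letter a) = fst a"
  by (simp add: inv_letter_def)

lemma snd_inv_letter [simp]: "snd (inv_letter a) = (\<not> snd a)"
  by (simp add: inv_letter_def)

lemma inv_letter_inv_letter [simp]: "inv_letter (inv_letter a) = a"
  by (cases a) simp

lemma inv_pword_Nil [simp]: "inv_pword [] = []"
  by (simp add: inv_pword_def)

lemma inv_pword_Cons [simp]: "inv_pword (a # w) = inv_pword w @ [inv_letter a]"
  by (simp add: inv_pword_def)

lemma inv_pword_append [simp]: "inv_pword (u @ v) = inv_pword v @ inv_pword u"
  by (simp add: inv_pword_def)

lemma inv_pword_inv_pword [simp]: "inv_pword (inv_pword w) = w"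
  by (induction w) auto

lemma gen_words_Nil [simp]: "[] \<in> gen_words S"
  by (simp add: gen_words_def)

lemma gen_words_Cons [simp]: "a # w \<in> gen_words S \<longleftrightarrow> fst a \<in> S \<and> w \<in> gen_words S"
  by (cases a) (auto simp: gen_words_def)

lemma gen_words_append [simp]: "u @ v \<in> gen_words S \<longleftrightarrow> u \<in> gen_words S \<and> v \<in> gen_words S"
  by (simp add: gen_words_def)

lemma gen_words_inv_pword [simp]: "inv_pword w \<in> gen_words S \<longleftrightarrow> w \<in> gen_words S"
  by (induction w) auto

declare pres_trans [trans]

lemma pres_eq_in_context:
  assumes "pres_eq R u v"
  shows "pres_eq R (x @ u @ y) (x @ v @ y)"
  using assms
proof (induction rule: pres_eq.induct)
  case (pres_cancel u a v)
  show ?case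
    using pres_eq.pres_cancel [of R "x @ u" a "v @ y"] by simp
next
  case (pres_rel r u v)
  show ?case
    using pres_eq.pres_rel [OF pres_rel, of "x @ u" "v @ y"] by simp
qed (blast intro: pres_eq.intros)+

lemma pres_eq_inverse_letters: "pres_eq R [a, inv_letter a] []"
  using pres_cancel [of R "[]" a "[]"] by simp

lemma pres_eq_append:
  assumes "pres_eq R u u'" and "pres_eq R v v'"
  shows "pres_eq R (u @ v) (u' @ v')"
proof -
  have "pres_eq R (u @ v) (u' @ v)"
    using pres_eq_in_context [OF assms(1), of "[]" v] by simp
  also have "pres_eq R (u' @ v) (u' @ v')"
    using pres_eq_in_context [OF assms(2), of u' "[]"] by simp
  finally show ?thesis .
qed

lemma pres_eq_append_inv_pword: "pres_eq R (w @ inv_pword w) []"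
proof (induction w)
  case (Cons a w)
  have "pres_eq R (a # w @ inv_pword w @ [inv_letter a]) [a, inv_letter a]"
    using pres_eq_in_context [OF Cons.IH, of "[a]" "[inv_letter a]"] by simp
  also have "pres_eq R [a, inv_letter a] []"
    by (rule pres_eq_inverse_letters)
  finally show ?case
    by simp
qed (simp add: pres_refl)

lemma pres_eq_inv_pword_append: "pres_eq R (inv_pword w @ w) []"
  using pres_eq_append_inv_pword [of R "inv_pword w"] by simp

lemma pres_eq_of_append_inv_pword:
  assumes "pres_eq R (u @ inv_pword v) []"
  shows "pres_eq R u v"
proof -
  have "pres_eq R u (u @ inv_pword v @ v)"
    using pres_eq_in_context [OF pres_eq_inv_pword_append, of R u v "[]"] by (simp add: pres_sym)
  also have "pres_eq R (u @ inv_pword v @ v) v"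
    using pres_eq_in_context [OF assms, of "[]" v] by simp
  finally show ?thesis .
qed

lemma pres_eq_inv_pword:
  assumes "pres_eq R u v"
  shows "pres_eq R (inv_pword u) (inv_pword v)"
proof (rule pres_eq_of_append_inv_pword)
  have "pres_eq R (inv_pword u @ v) (inv_pword u @ u)"
    using pres_eq_in_context [OF pres_sym [OF assms], of "inv_pword u" "[]"] by simp
  also have "pres_eq R (inv_pword u @ u) []"
    by (rule pres_eq_inv_pword_append)
  finally show "pres_eq R (inv_pword u @ inv_pword (inv_pword v)) []"
    by simp
qed

lemma pres_eq_commute_of_commutator:
  assumes "commutator_word i j \<in> R"
  shows "pres_eq R [(i, False), (j, False)] [(j, False), (i, False)]"
  by (rule pres_eq_of_append_inv_pword)
    (use pres_rel [OF assms, of "[]" "[]"] in \<open>simp add: commutator_word_def\<close>)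

lemma pres_eq_commute_inv_letter:
  assumes "pres_eq R [x, y] [y, x]"
  shows "pres_eq R [inv_letter x, y] [y, inv_letter x]"
proof -
  have "pres_eq R [inv_letter x, y] [inv_letter x, y, x, inv_letter x]"
    using pres_eq_in_context [OF pres_eq_append_inv_pword [of R "[x]"], of "[inv_letter x, y]" "[]"]
    by (simp add: pres_sym)
  also have "pres_eq R [inv_letter x, y, x, inv_letter x] [inv_letter x, x, y, inv_letter x]"
    using pres_eq_in_context [OF pres_sym [OF assms], of "[inv_letter x]" "[inv_letter x]"] by simp
  also have "pres_eq R [inv_letter x, x, y, inv_letter x] [y, inv_letter x]"
    using pres_eq_in_context [OF pres_eq_inv_pword_append [of R "[x]"], of "[]" "[y, inv_letter x]"]
    by simp
  finally show ?thesis .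
qed

lemma pres_eq_commute_letters:
  assumes "pres_eq R [(i, False), (j, False)] [(j, False), (i, False)]"
  shows "pres_eq R [(i, s), (j, t)] [(j, t), (i, s)]"
proof -
  have commute_j: "pres_eq R [(j, False), (i, s)] [(i, s), (j, False)]"
    using assms pres_eq_commute_inv_letter [OF assms] by (cases s) (simp_all add: pres_sym)
  show ?thesis
    using pres_eq_commute_inv_letter [OF commute_j] by (cases t) (simp_all add: commute_j pres_sym)
qed

context
  fixes S :: "'a set" and R :: "'a pword set"
begin

lemma pres_class_self: "w \<in> gen_words S \<Longrightarrow> w \<in> pres_class S R w"
  by (simp add: pres_class_def pres_refl)

lemma pres_class_eq_iff:
  assumes "u \<in> gen_words S" and "v \<in> gen_words S"
  shows "pres_class S R u = pres_class S R v \<longleftrightarrow> pres_eq R u v"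
proof
  assume "pres_class S R u = pres_class S R v"
  then have "v \<in> pres_class S R u"
    using pres_class_self [OF assms(2)] by simp
  then show "pres_eq R u v"
    by (simp add: pres_class_def)
next
  assume "pres_eq R u v"
  then show "pres_class S R u = pres_class S R v"
    unfolding pres_class_def by (blast intro: pres_sym pres_trans)
qed

lemma carrier_pres_group: "carrier (pres_group S R) = pres_class S R ` gen_words S"
  by (simp add: pres_group_def)

lemma one_pres_group: "\<one>\<^bsub>pres_group S R\<^esub> = pres_class S R []"
  by (simp add: pres_group_def)

lemma mult_pres_group:
  assumes "u \<in> gen_words S" and "v \<in> gen_words S"
  shows "pres_class S R u \<otimes>\<^bsub>pres_group S R\<^esub> pres_class S R v = pres_class S R (u @ v)"
proof -
  have "pres_eq R (u @ v) w \<longleftrightarrow> (\<exists>u'\<in>pres_class S R u. \<exists>v'\<in>pres_class S R v. pres_eq R w (u' @ v'))"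
    for w
  proof
    assume "pres_eq R (u @ v) w"
    then show "\<exists>u'\<in>pres_class S R u. \<exists>v'\<in>pres_class S R v. pres_eq R w (u' @ v')"
      using assms pres_class_self by (blast intro: pres_sym)
  next
    assume "\<exists>u'\<in>pres_class S R u. \<exists>v'\<in>pres_class S R v. pres_eq R w (u' @ v')"
    then obtain u' v' where "pres_eq R u u'" "pres_eq R v v'" "pres_eq R w (u' @ v')"
      by (auto simp: pres_class_def)
    then show "pres_eq R (u @ v) w"
      by (blast intro: pres_trans pres_sym pres_eq_append)
  qed
  then show ?thesis
    by (auto simp: pres_group_def pres_class_def)
qed

lemma group_pres_group: "group (pres_group S R)"
proof (rule groupI)
  fix x y z
  assume "x \<in> carrier (pres_group S R)" "y \<in> carrier (pres_group S R)"
    "z \<in> carrier (pres_group S R)"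
  then show "x \<otimes>\<^bsub>pres_group S R\<^esub> y \<in> carrier (pres_group S R)"
    and "x \<otimes>\<^bsub>pres_group S R\<^esub> y \<otimes>\<^bsub>pres_group S R\<^esub> z =
      x \<otimes>\<^bsub>pres_group S R\<^esub> (y \<otimes>\<^bsub>pres_group S R\<^esub> z)"
    and "\<one>\<^bsub>pres_group S R\<^esub> \<otimes>\<^bsub>pres_group S R\<^esub> x = x"
    by (auto simp: carrier_pres_group one_pres_group mult_pres_group)
  from \<open>x \<in> carrier (pres_group S R)\<close>
  obtain w where w: "w \<in> gen_words S" "x = pres_class S R w"
    by (auto simp: carrier_pres_group)
  then have "pres_class S R (inv_pword w) \<otimes>\<^bsub>pres_group S R\<^esub> x = \<one>\<^bsub>pres_group S R\<^esub>"
    by (simp add: one_pres_group mult_pres_group pres_class_eq_iff pres_eq_inv_pword_append)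
  then show "\<exists>x'\<in>carrier (pres_group S R). x' \<otimes>\<^bsub>pres_group S R\<^esub> x = \<one>\<^bsub>pres_group S R\<^esub>"
    using w by (auto simp: carrier_pres_group)
qed (simp add: carrier_pres_group one_pres_group)

lemma inv_pres_group:
  assumes "w \<in> gen_words S"
  shows "inv\<^bsub>pres_group S R\<^esub> (pres_class S R w) = pres_class S R (inv_pword w)"
  using assms
  by (intro group.inv_equality [OF group_pres_group])
    (simp_all add: carrier_pres_group one_pres_group mult_pres_group pres_class_eq_iff
      pres_eq_inv_pword_append)

end

section \<open>Reducing words by commutations and cancellations\<close>

definition commuting_letters :: "('a \<Rightarrow> 'a \<Rightarrow> bool) \<Rightarrow> 'a \<times> bool \<Rightarrow> 'a \<times> bool \<Rightarrow> bool" where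
  "commuting_letters E x y \<longleftrightarrow> fst x = fst y \<or> E (fst x) (fst y)"

definition cancelling_letters :: "('a \<Rightarrow> bool) \<Rightarrow> 'a \<times> bool \<Rightarrow> 'a \<times> bool \<Rightarrow> bool" where
  "cancelling_letters I x y \<longleftrightarrow> fst x = fst y \<and> (snd x \<noteq> snd y \<or> I (fst x))"

text \<open>The reduced word is kept reversed, as a stack whose top is the last letter.\<close>

fun push_letter :: "('a \<Rightarrow> 'a \<Rightarrow> bool) \<Rightarrow> ('a \<Rightarrow> bool) \<Rightarrow> 'a pword \<Rightarrow> 'a \<times> bool \<Rightarrow> 'a pword"
  where
    "push_letter E I [] x = [x]"
  | "push_letter E I (y # ys) x =
      (if cancelling_letters I y x then ys
       else if commuting_letters E y x then y # push_letter E I ys x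
       else x # y # ys)"

definition reduce_word :: "('a \<Rightarrow> 'a \<Rightarrow> bool) \<Rightarrow> ('a \<Rightarrow> bool) \<Rightarrow> 'a pword \<Rightarrow> 'a pword" where
  "reduce_word E I w = rev (foldl (push_letter E I) [] w)"

context
  fixes R :: "'a pword set" and E :: "'a \<Rightarrow> 'a \<Rightarrow> bool" and I :: "'a \<Rightarrow> bool"
  assumes commute: "\<And>i j. E i j \<Longrightarrow> pres_eq R [(i, False), (j, False)] [(j, False), (i, False)]"
    and involution: "\<And>i. I i \<Longrightarrow> pres_eq R [(i, False), (i, False)] []"
begin

lemma pres_eq_cancelling_letters:
  assumes "cancelling_letters I x y"
  shows "pres_eq R [x, y] []"
proof -
  obtain i s t where xy: "x = (i, s)" "y = (i, t)" and "s \<noteq> t \<or> I i"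
    using assms by (cases x, cases y) (auto simp: cancelling_letters_def)
  then consider "y = inv_letter x" | "I i" "x = (i, False)" "y = (i, False)"
    | "I i" "x = (i, True)" "y = (i, True)"
    by (cases s; cases t) auto
  then show ?thesis
  proof cases
    case 3
    then show ?thesis
      using pres_eq_inv_pword [OF involution [OF \<open>I i\<close>]] by simp
  qed (simp_all add: pres_eq_inverse_letters involution)
qed

lemma pres_eq_commuting_letters:
  assumes "commuting_letters E x y"
  shows "pres_eq R [x, y] [y, x]"
proof (cases "fst x = fst y")
  case True
  then consider "y = x" | "y = inv_letter x"
    by (cases x, cases y) auto
  then show ?thesis
  proof cases
    case 2
    have "pres_eq R [x, y] []"
      using pres_eq_inverse_letters [of R x] 2 by simp
    also have "pres_eq R [] [y, x]"
      using pres_sym [OF pres_eq_inverse_letters [of R y]] 2 by simp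
    finally show ?thesis .
  qed (simp add: pres_refl)
next
  case False
  then show ?thesis
    using assms pres_eq_commute_letters [OF commute, of "fst x" "fst y" "snd x" "snd y"]
    by (simp add: commuting_letters_def)
qed

lemma pres_eq_push_letter: "pres_eq R (rev ys @ [x]) (rev (push_letter E I ys x))"
proof (induction ys)
  case (Cons y ys)
  consider "cancelling_letters I y x"
    | "\<not> cancelling_letters I y x" "commuting_letters E y x"
    | "\<not> cancelling_letters I y x" "\<not> commuting_letters E y x"
    by blast
  then show ?case
  proof cases
    case 1
    then show ?thesis
      using pres_eq_in_context [OF pres_eq_cancelling_letters [OF 1], of "rev ys" "[]"] by simp
  next
    case 2
    have "pres_eq R (rev ys @ [y, x]) (rev ys @ [x, y])"
      using pres_eq_in_context [OF pres_eq_commuting_letters [OF 2(2)], of "rev ys" "[]"] by simp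
    also have "pres_eq R (rev ys @ [x, y]) (rev (push_letter E I ys x) @ [y])"
      using pres_eq_append [OF Cons.IH pres_refl, of "[y]"] by simp
    finally show ?thesis
      using 2 by simp
  qed (simp add: pres_refl)
qed (simp add: pres_refl)

lemma pres_eq_reduce_word: "pres_eq R w (reduce_word E I w)"
proof -
  have "pres_eq R (rev ys @ w) (rev (foldl (push_letter E I) ys w))" for ys
  proof (induction w arbitrary: ys)
    case (Cons x w)
    have "pres_eq R ((rev ys @ [x]) @ w) (rev (push_letter E I ys x) @ w)"
      by (rule pres_eq_append [OF pres_eq_push_letter pres_refl])
    also have "pres_eq R \<dots> (rev (foldl (push_letter E I) (push_letter E I ys x) w))"
      by (rule Cons.IH)
    finally show ?case
      by simp
  qed (simp add: pres_refl)
  from this [of "[]"] show ?thesis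
    by (simp add: reduce_word_def)
qed

lemma pres_eq_of_reduce_word:
  assumes "reduce_word E I (u @ inv_pword v) = []"
  shows "pres_eq R u v"
  using pres_eq_reduce_word [of "u @ inv_pword v"] assms by (simp add: pres_eq_of_append_inv_pword)

end

section \<open>Coset tables and Schreier rewriting\<close>

fun scan :: "('c \<Rightarrow> 'a \<Rightarrow> 'c) \<Rightarrow> 'c \<Rightarrow> 'a pword \<Rightarrow> 'c" where
  "scan act c [] = c"
| "scan act c (x # w) = scan act (act c (fst x)) w"

definition schreier_rewrite_letter ::
  "('c \<Rightarrow> 'a \<Rightarrow> 'c) \<Rightarrow> ('c \<Rightarrow> 'a \<Rightarrow> 'b pword) \<Rightarrow> 'c \<Rightarrow> 'a \<times> bool \<Rightarrow> 'b pword"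
  where "schreier_rewrite_letter act label c x =
    (if snd x then inv_pword (label (act c (fst x)) (fst x)) else label c (fst x))"

fun schreier_rewrite ::
  "('c \<Rightarrow> 'a \<Rightarrow> 'c) \<Rightarrow> ('c \<Rightarrow> 'a \<Rightarrow> 'b pword) \<Rightarrow> 'c \<Rightarrow> 'a pword \<Rightarrow> 'b pword"
  where
    "schreier_rewrite act label c [] = []"
  | "schreier_rewrite act label c (x # w) =
      schreier_rewrite_letter act label c x @ schreier_rewrite act label (act c (fst x)) w"

definition coset_stabilizer :: "'a set \<Rightarrow> 'a pword set \<Rightarrow> ('c \<Rightarrow> 'a \<Rightarrow> 'c) \<Rightarrow> 'c \<Rightarrow> 'a pword set set"
  where "coset_stabilizer S R act c = {pres_class S R w | w. w \<in> gen_words S \<and> scan act c w = c}"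

lemma coset_stabilizerE:
  assumes "A \<in> coset_stabilizer S R act c"
  obtains w where "A = pres_class S R w" "w \<in> gen_words S" "scan act c w = c"
  using assms by (auto simp: coset_stabilizer_def)

lemma scan_append [simp]: "scan act c (u @ v) = scan act (scan act c u) v"
  by (induction u arbitrary: c) auto

lemma schreier_rewrite_append [simp]:
  "schreier_rewrite act label c (u @ v) =
    schreier_rewrite act label c u @ schreier_rewrite act label (scan act c u) v"
  by (induction u arbitrary: c) auto

text \<open>The cosets of the subgroup form the set \<open>C\<close>, the subgroup itself being the coset
  \<open>base\<close>, and \<open>act c g\<close> is the coset \<open>c\<close> multiplied by the generator \<open>g\<close>. Every generator
  is required to act as an involution, so that an inverse letter acts like the letter itself.\<close>

locale coset_table =
  fixes C :: "'c set" and base :: 'c and act :: "'c \<Rightarrow> 'a \<Rightarrow> 'c"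
  assumes finite_cosets: "finite C"
    and base_in_cosets: "base \<in> C"
    and act_in_cosets: "c \<in> C \<Longrightarrow> act c g \<in> C"
    and act_act: "c \<in> C \<Longrightarrow> act (act c g) g = c"
begin

lemma scan_in_cosets: "c \<in> C \<Longrightarrow> scan act c w \<in> C"
  by (induction w arbitrary: c) (auto simp: act_in_cosets)

lemma scan_inv_pword: "c \<in> C \<Longrightarrow> scan act (scan act c w) (inv_pword w) = c"
  by (induction w arbitrary: c) (auto simp: act_in_cosets act_act)

lemma schreier_rewrite_inv_pword:
  "c \<in> C \<Longrightarrow> schreier_rewrite act label (scan act c w) (inv_pword w) =
    inv_pword (schreier_rewrite act label c w)"
proof (induction w arbitrary: c)
  case (Cons x w)
  then show ?case
    using scan_inv_pword [of "act c (fst x)" w]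
    by (auto simp: schreier_rewrite_letter_def act_in_cosets act_act)
qed simp

lemma schreier_rewrite_gen_words:
  assumes "\<And>c g. c \<in> C \<Longrightarrow> g \<in> S \<Longrightarrow> label c g \<in> gen_words S'"
    and "w \<in> gen_words S" and "c \<in> C"
  shows "schreier_rewrite act label c w \<in> gen_words S'"
  using assms(2,3)
  by (induction w arbitrary: c) (auto simp: schreier_rewrite_letter_def assms(1) act_in_cosets)

lemma subgroup_coset_stabilizer: "subgroup (coset_stabilizer S R act base) (pres_group S R)"
proof (rule group.subgroupI [OF group_pres_group])
  show "coset_stabilizer S R act base \<subseteq> carrier (pres_group S R)"
    by (auto simp: coset_stabilizer_def carrier_pres_group)
  have "pres_class S R [] \<in> coset_stabilizer S R act base"
    unfolding coset_stabilizer_def by (blast intro: gen_words_Nil scan.simps(1))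
  then show "coset_stabilizer S R act base \<noteq> {}"
    by blast
next
  fix A
  assume "A \<in> coset_stabilizer S R act base"
  then obtain w where w: "A = pres_class S R w" "w \<in> gen_words S" "scan act base w = base"
    by (rule coset_stabilizerE)
  then have "scan act base (inv_pword w) = base"
    using scan_inv_pword [OF base_in_cosets, of w] by simp
  then show "inv\<^bsub>pres_group S R\<^esub> A \<in> coset_stabilizer S R act base"
    using w by (auto simp: coset_stabilizer_def inv_pres_group)
next
  fix A B
  assume "A \<in> coset_stabilizer S R act base" and "B \<in> coset_stabilizer S R act base"
  then obtain u v where "A = pres_class S R u" "u \<in> gen_words S" "scan act base u = base"
    and "B = pres_class S R v" "v \<in> gen_words S" "scan act base v = base"
    by (auto elim!: coset_stabilizerE)
  then show "A \<otimes>\<^bsub>pres_group S R\<^esub> B \<in> coset_stabilizer S R act base"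
    by (auto simp: coset_stabilizer_def mult_pres_group intro!: exI [of _ "u @ v"])
qed

text \<open>Words ending in the same coset lie in the same right coset of the stabilizer.\<close>

lemma finite_rcosets_coset_stabilizer:
  "finite (rcosets\<^bsub>pres_group S R\<^esub> coset_stabilizer S R act base)"
proof -
  let ?G = "pres_group S R" and ?H = "coset_stabilizer S R act base"
  define rep where "rep c = (SOME v. v \<in> gen_words S \<and> scan act base v = c)" for c
  have "?H #>\<^bsub>?G\<^esub> pres_class S R u \<in> (\<lambda>c. ?H #>\<^bsub>?G\<^esub> pres_class S R (rep c)) ` C"
    if u: "u \<in> gen_words S" for u
  proof -
    let ?c = "scan act base u"
    have "rep ?c \<in> gen_words S \<and> scan act base (rep ?c) = ?c"
      unfolding rep_def by (rule someI [of _ u]) (simp add: u)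
    then have rep: "rep ?c \<in> gen_words S" "scan act base (rep ?c) = ?c"
      by simp_all
    then have "scan act base (u @ inv_pword (rep ?c)) = base"
      using scan_inv_pword [OF base_in_cosets, of "rep ?c"] by simp
    then have "pres_class S R u \<otimes>\<^bsub>?G\<^esub> inv\<^bsub>?G\<^esub> pres_class S R (rep ?c) \<in> ?H"
      using u rep by (auto simp: coset_stabilizer_def inv_pres_group mult_pres_group)
    then have "?H #>\<^bsub>?G\<^esub> pres_class S R (rep ?c) = ?H #>\<^bsub>?G\<^esub> pres_class S R u"
      using u rep subgroup_coset_stabilizer group_pres_group
      by (metis carrier_pres_group group.repr_independence image_eqI subgroup.rcos_module_rev)
    then show ?thesis
      using scan_in_cosets [OF base_in_cosets] by blast
  qed
  then have "rcosets\<^bsub>?G\<^esub> ?H \<subseteq> (\<lambda>c. ?H #>\<^bsub>?G\<^esub> pres_class S R (rep c)) ` C"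
    by (auto simp: RCOSETS_def carrier_pres_group)
  then show ?thesis
    using finite_cosets finite_subset by blast
qed

lemma schreier_rewrite_pres_eq:
  assumes relators: "\<And>r c. r \<in> R \<Longrightarrow> c \<in> C \<Longrightarrow>
      scan act c r = c \<and> pres_eq R' (schreier_rewrite act label c r) []"
    and "pres_eq R u v" and "c \<in> C"
  shows "scan act c u = scan act c v \<and>
    pres_eq R' (schreier_rewrite act label c u) (schreier_rewrite act label c v)"
  using assms(2,3)
proof (induction arbitrary: c rule: pres_eq.induct)
  case (pres_cancel u a v)
  let ?c = "scan act c u"
  have c: "?c \<in> C"
    using pres_cancel scan_in_cosets by blast
  have "pres_eq R' (schreier_rewrite_letter act label ?c a @
      schreier_rewrite_letter act label (act ?c (fst a)) (inv_letter a)) []"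
    using c by (cases a) (auto simp: schreier_rewrite_letter_def act_in_cosets act_act
        pres_eq_append_inv_pword pres_eq_inv_pword_append)
  from pres_eq_in_context [OF this, of "schreier_rewrite act label c u"
      "schreier_rewrite act label ?c v"]
  show ?case
    using c by (simp add: act_act)
next
  case (pres_rel r u v)
  let ?c = "scan act c u"
  have "scan act ?c r = ?c" and "pres_eq R' (schreier_rewrite act label ?c r) []"
    using relators [OF pres_rel(1)] scan_in_cosets [OF pres_rel(2)] by auto
  from this(1) pres_eq_in_context [OF this(2), of "schreier_rewrite act label c u"
      "schreier_rewrite act label ?c v"]
  show ?case
    by simp
next
  case (pres_sym u v)
  then show ?case
    by (metis pres_eq.pres_sym)
next
  case (pres_trans u v w)
  then show ?case
    by (metis pres_eq.pres_trans)
qed (simp add: pres_eq.pres_refl)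

end

text \<open>\<open>label c g\<close> is a word of the second group standing for the Schreier generator
  \<open>t\<^sub>c g t\<^sub>c\<^sub>g\<inverse>\<close>, where \<open>t = transversal\<close>; rewriting it back with \<open>label'\<close> has to
  give that Schreier generator.\<close>

locale schreier_transfer =
  source: coset_table C base act + target: coset_table C' base' act'
  for C :: "'c set" and base act and C' :: "'d set" and base' act' +
  fixes S :: "'a set" and R :: "'a pword set"
    and label :: "'c \<Rightarrow> 'a \<Rightarrow> 'b pword" and transversal :: "'c \<Rightarrow> 'a pword"
    and label' :: "'d \<Rightarrow> 'b \<Rightarrow> 'a pword"
  assumes scan_label: "c \<in> C \<Longrightarrow> g \<in> S \<Longrightarrow> scan act' base' (label c g) = base'"
    and schreier_rewrite_label: "c \<in> C \<Longrightarrow> g \<in> S \<Longrightarrow>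
      pres_eq R (schreier_rewrite act' label' base' (label c g))
        (transversal c @ [(g, False)] @ inv_pword (transversal (act c g)))"
begin

lemma scan_schreier_rewrite_letter:
  assumes "fst x \<in> S" and "c \<in> C"
  shows "scan act' base' (schreier_rewrite_letter act label c x) = base'"
proof (cases "snd x")
  case True
  have "scan act' base' (label (act c (fst x)) (fst x)) = base'"
    using assms by (simp add: scan_label source.act_in_cosets)
  then show ?thesis
    using True target.scan_inv_pword [OF target.base_in_cosets, of "label (act c (fst x)) (fst x)"]
    by (simp add: schreier_rewrite_letter_def)
qed (use assms in \<open>simp add: schreier_rewrite_letter_def scan_label\<close>)

lemma scan_schreier_rewrite:
  "w \<in> gen_words S \<Longrightarrow> c \<in> C \<Longrightarrow> scan act' base' (schreier_rewrite act label c w) = base'"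
  by (induction w arbitrary: c) (simp_all add: scan_schreier_rewrite_letter source.act_in_cosets)

lemma schreier_rewrite_letter_round_trip:
  assumes "g \<in> S" and "c \<in> C"
  shows "pres_eq R (schreier_rewrite act' label' base' (schreier_rewrite_letter act label c (g, s)))
    (transversal c @ [(g, s)] @ inv_pword (transversal (act c g)))"
proof (cases s)
  case True
  let ?e = "act c g"
  have e: "?e \<in> C" and c: "act ?e g = c"
    using assms by (simp_all add: source.act_in_cosets source.act_act)
  have "schreier_rewrite act' label' base' (inv_pword (label ?e g)) =
      inv_pword (schreier_rewrite act' label' base' (label ?e g))"
    using target.schreier_rewrite_inv_pword [OF target.base_in_cosets, of label' "label ?e g"]
      scan_label [OF e assms(1)]
    by simp
  moreover have "pres_eq R (inv_pword (schreier_rewrite act' label' base' (label ?e g)))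
      (inv_pword (transversal ?e @ [(g, False)] @ inv_pword (transversal c)))"
    using pres_eq_inv_pword [OF schreier_rewrite_label [OF e assms(1)]] c by simp
  ultimately show ?thesis
    using True by (simp add: schreier_rewrite_letter_def)
qed (use assms schreier_rewrite_label in \<open>simp add: schreier_rewrite_letter_def\<close>)

lemma schreier_rewrite_round_trip:
  assumes "w \<in> gen_words S" and "c \<in> C"
  shows "pres_eq R (schreier_rewrite act' label' base' (schreier_rewrite act label c w))
    (transversal c @ w @ inv_pword (transversal (scan act c w)))"
  using assms
proof (induction w arbitrary: c)
  case Nil
  show ?case
    using pres_sym [OF pres_eq_append_inv_pword] by simp
next
  case (Cons x w)
  obtain g s where x: "x = (g, s)"
    by (cases x)
  let ?e = "act c g" and ?t = "transversal"
  have g: "g \<in> S" and w: "w \<in> gen_words S" and e: "?e \<in> C"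
    using Cons.prems x by (simp_all add: source.act_in_cosets)
  have "pres_eq R (schreier_rewrite act' label' base' (schreier_rewrite act label c (x # w)))
      ((?t c @ [x] @ inv_pword (?t ?e)) @ (?t ?e @ w @ inv_pword (?t (scan act ?e w))))"
    using pres_eq_append [OF schreier_rewrite_letter_round_trip [OF g Cons.prems(2)]
        Cons.IH [OF w e]]
      scan_schreier_rewrite_letter [of x c] g Cons.prems(2) x
    by simp
  also have "pres_eq R \<dots> (?t c @ (x # w) @ inv_pword (?t (scan act c (x # w))))"
    using pres_eq_in_context [OF pres_eq_inv_pword_append [of R "?t ?e"], of "?t c @ [x]"
        "w @ inv_pword (?t (scan act ?e w))"] x
    by simp
  finally show ?case .
qed

end

locale commensurability_certificate =
  forward: schreier_transfer C1 base1 act1 C2 base2 act2 S1 R1 label1 transversal1 label2 +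
  backward: schreier_transfer C2 base2 act2 C1 base1 act1 S2 R2 label2 transversal2 label1
  for C1 :: "'c set" and base1 act1 and C2 :: "'d set" and base2 act2
    and S1 :: "'a set" and R1 label1 transversal1 and S2 :: "'b set" and R2 label2 transversal2 +
  assumes relators1: "\<And>r c. r \<in> R1 \<Longrightarrow> c \<in> C1 \<Longrightarrow>
      scan act1 c r = c \<and> pres_eq R2 (schreier_rewrite act1 label1 c r) []"
    and relators2: "\<And>r c. r \<in> R2 \<Longrightarrow> c \<in> C2 \<Longrightarrow>
      scan act2 c r = c \<and> pres_eq R1 (schreier_rewrite act2 label2 c r) []"
    and label1_gen_words: "\<And>c g. c \<in> C1 \<Longrightarrow> g \<in> S1 \<Longrightarrow> label1 c g \<in> gen_words S2"
    and label2_gen_words: "\<And>c g. c \<in> C2 \<Longrightarrow> g \<in> S2 \<Longrightarrow> label2 c g \<in> gen_words S1"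
    and transversal1_base: "transversal1 base1 = []"
    and transversal2_base: "transversal2 base2 = []"
begin

abbreviation "H1 \<equiv> coset_stabilizer S1 R1 act1 base1"
abbreviation "H2 \<equiv> coset_stabilizer S2 R2 act2 base2"
abbreviation "rewrite1 \<equiv> schreier_rewrite act1 label1 base1"
abbreviation "rewrite2 \<equiv> schreier_rewrite act2 label2 base2"

definition transfer :: "'a pword set \<Rightarrow> 'b pword set" where
  "transfer A = pres_class S2 R2 (rewrite1 (SOME w. w \<in> A))"

lemma rewrite1_gen_words: "w \<in> gen_words S1 \<Longrightarrow> rewrite1 w \<in> gen_words S2"
  by (rule forward.source.schreier_rewrite_gen_words
      [OF label1_gen_words _ forward.source.base_in_cosets])

lemma rewrite2_gen_words: "w \<in> gen_words S2 \<Longrightarrow> rewrite2 w \<in> gen_words S1"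
  by (rule forward.target.schreier_rewrite_gen_words
      [OF label2_gen_words _ forward.target.base_in_cosets])

lemma rewrite1_pres_eq: "pres_eq R1 u v \<Longrightarrow> pres_eq R2 (rewrite1 u) (rewrite1 v)"
  using forward.source.schreier_rewrite_pres_eq [OF relators1 _ forward.source.base_in_cosets]
  by (rule conjunct2)

lemma rewrite2_pres_eq: "pres_eq R2 u v \<Longrightarrow> pres_eq R1 (rewrite2 u) (rewrite2 v)"
  using forward.target.schreier_rewrite_pres_eq [OF relators2 _ forward.target.base_in_cosets]
  by (rule conjunct2)

lemma rewrite2_rewrite1:
  assumes "w \<in> gen_words S1" and "scan act1 base1 w = base1"
  shows "pres_eq R1 (rewrite2 (rewrite1 w)) w"
  using forward.schreier_rewrite_round_trip [OF assms(1) forward.source.base_in_cosets] assms(2)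
  by (simp add: transversal1_base)

lemma rewrite1_rewrite2:
  assumes "w \<in> gen_words S2" and "scan act2 base2 w = base2"
  shows "pres_eq R2 (rewrite1 (rewrite2 w)) w"
  using backward.schreier_rewrite_round_trip [OF assms(1) forward.target.base_in_cosets] assms(2)
  by (simp add: transversal2_base)

lemma transfer_pres_class:
  assumes "w \<in> gen_words S1"
  shows "transfer (pres_class S1 R1 w) = pres_class S2 R2 (rewrite1 w)"
proof -
  let ?v = "SOME v. v \<in> pres_class S1 R1 w"
  have "?v \<in> pres_class S1 R1 w"
    using pres_class_self [OF assms] by (rule someI)
  then have "?v \<in> gen_words S1" and "pres_eq R1 w ?v"
    by (simp_all add: pres_class_def)
  then show ?thesis
    using assms rewrite1_pres_eq
    by (simp add: transfer_def pres_class_eq_iff rewrite1_gen_words pres_sym)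
qed

lemma transfer_in_H2: "A \<in> H1 \<Longrightarrow> transfer A \<in> H2"
  by (erule coset_stabilizerE)
    (auto simp: coset_stabilizer_def transfer_pres_class rewrite1_gen_words
      forward.scan_schreier_rewrite forward.source.base_in_cosets)

lemma transfer_hom:
  "transfer \<in> hom (pres_group S1 R1\<lparr>carrier := H1\<rparr>) (pres_group S2 R2\<lparr>carrier := H2\<rparr>)"
proof (rule homI)
  fix A B
  assume "A \<in> carrier (pres_group S1 R1\<lparr>carrier := H1\<rparr>)"
    and "B \<in> carrier (pres_group S1 R1\<lparr>carrier := H1\<rparr>)"
  then obtain u v where "A = pres_class S1 R1 u" "u \<in> gen_words S1" "scan act1 base1 u = base1"
    and "B = pres_class S1 R1 v" "v \<in> gen_words S1"
    by (auto elim!: coset_stabilizerE)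
  then show "transfer (A \<otimes>\<^bsub>pres_group S1 R1\<lparr>carrier := H1\<rparr>\<^esub> B) =
      transfer A \<otimes>\<^bsub>pres_group S2 R2\<lparr>carrier := H2\<rparr>\<^esub> transfer B"
    by (simp add: mult_pres_group transfer_pres_class rewrite1_gen_words)
qed (simp add: transfer_in_H2)

lemma inj_on_transfer: "inj_on transfer H1"
proof (rule inj_onI)
  fix A B
  assume "A \<in> H1" "B \<in> H1" and eq: "transfer A = transfer B"
  then obtain u v
    where u: "A = pres_class S1 R1 u" "u \<in> gen_words S1" "scan act1 base1 u = base1"
      and v: "B = pres_class S1 R1 v" "v \<in> gen_words S1" "scan act1 base1 v = base1"
    by (auto elim!: coset_stabilizerE)
  have "pres_eq R2 (rewrite1 u) (rewrite1 v)"
    using eq u v by (simp add: transfer_pres_class pres_class_eq_iff rewrite1_gen_words)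
  then have "pres_eq R1 (rewrite2 (rewrite1 u)) (rewrite2 (rewrite1 v))"
    by (rule rewrite2_pres_eq)
  then have "pres_eq R1 u v"
    using rewrite2_rewrite1 [OF u(2,3)] rewrite2_rewrite1 [OF v(2,3)]
    by (blast intro: pres_sym pres_trans)
  then show "A = B"
    using u v by (simp add: pres_class_eq_iff)
qed

lemma transfer_image: "transfer ` H1 = H2"
proof
  show "transfer ` H1 \<subseteq> H2"
    using transfer_in_H2 by blast
next
  show "H2 \<subseteq> transfer ` H1"
  proof
    fix B
    assume "B \<in> H2"
    then obtain w
      where w: "B = pres_class S2 R2 w" "w \<in> gen_words S2" "scan act2 base2 w = base2"
      by (rule coset_stabilizerE)
    have v: "rewrite2 w \<in> gen_words S1" "scan act1 base1 (rewrite2 w) = base1"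
      using w rewrite2_gen_words backward.scan_schreier_rewrite forward.target.base_in_cosets
      by auto
    then have "transfer (pres_class S1 R1 (rewrite2 w)) = B"
      using w rewrite1_rewrite2 [OF w(2,3)]
      by (simp add: transfer_pres_class pres_class_eq_iff rewrite1_gen_words)
    moreover have "pres_class S1 R1 (rewrite2 w) \<in> H1"
      using v by (auto simp: coset_stabilizer_def)
    ultimately show "B \<in> transfer ` H1"
      by blast
  qed
qed

theorem commensurable_pres_groups: "commensurable (pres_group S1 R1) (pres_group S2 R2)"
  unfolding commensurable_def
proof (intro exI conjI)
  show "pres_group S1 R1\<lparr>carrier := H1\<rparr> \<cong> pres_group S2 R2\<lparr>carrier := H2\<rparr>"
    using transfer_hom inj_on_transfer transfer_image
    by (auto simp: is_iso_def iso_def bij_betw_def)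
qed (simp_all add: forward.source.subgroup_coset_stabilizer forward.target.subgroup_coset_stabilizer
    forward.source.finite_rcosets_coset_stabilizer forward.target.finite_rcosets_coset_stabilizer)

end

section \<open>The groups \<open>FB\<^sub>7\<close> and \<open>A(P\<^sub>4)\<close>\<close>

definition fb_relators :: "nat pword set" where
  "fb_relators =
    {[(i, False), (i, False)] | i. i \<in> {1..6}} \<union>
    {commutator_word i j | i j. i \<in> {1..6} \<and> j \<in> {1..6} \<and> (i + 2 \<le> j \<or> j + 2 \<le> i)}"

definition ap_relators :: "nat pword set" where
  "ap_relators = {commutator_word i (i + 1) | i. i \<in> {0..3}}"

lemma FB7_eq: "FB7 = pres_group {1..6} fb_relators"
  by (simp add: FB7_def fb_relators_def)

lemma AP4_eq: "AP4 = pres_group {0..4} ap_relators"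
  by (simp add: AP4_def ap_relators_def)

definition fb_far_apart :: "nat \<Rightarrow> nat \<Rightarrow> bool" where
  "fb_far_apart i j \<longleftrightarrow> i \<in> {1..6} \<and> j \<in> {1..6} \<and> (i + 2 \<le> j \<or> j + 2 \<le> i)"

definition ap_adjacent :: "nat \<Rightarrow> nat \<Rightarrow> bool" where
  "ap_adjacent i j \<longleftrightarrow> i \<in> {0..3} \<and> j = i + 1 \<or> j \<in> {0..3} \<and> i = j + 1"

abbreviation fb_reduce :: "nat pword \<Rightarrow> nat pword" where
  "fb_reduce \<equiv> reduce_word fb_far_apart (\<lambda>i. i \<in> {1..6})"

abbreviation ap_reduce :: "nat pword \<Rightarrow> nat pword" where
  "ap_reduce \<equiv> reduce_word ap_adjacent (\<lambda>_. False)"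

lemma pres_eq_fb_of_reduce: "fb_reduce (u @ inv_pword v) = [] \<Longrightarrow> pres_eq fb_relators u v"
proof (rule pres_eq_of_reduce_word)
  show "pres_eq fb_relators [(i, False), (j, False)] [(j, False), (i, False)]"
    if "fb_far_apart i j" for i j
    using that
    by (intro pres_eq_commute_of_commutator) (auto simp: fb_relators_def fb_far_apart_def)
  show "pres_eq fb_relators [(i, False), (i, False)] []" if "i \<in> {1..6}" for i
    using that pres_rel [of "[(i, False), (i, False)]" fb_relators "[]" "[]"]
    by (auto simp: fb_relators_def)
qed

lemma pres_eq_ap_of_reduce: "ap_reduce (u @ inv_pword v) = [] \<Longrightarrow> pres_eq ap_relators u v"
proof (rule pres_eq_of_reduce_word)
  have "pres_eq ap_relators [(i, False), (i + 1, False)] [(i + 1, False), (i, False)]"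
    if "i \<in> {0..3}" for i
    using that by (intro pres_eq_commute_of_commutator) (auto simp: ap_relators_def)
  then show "pres_eq ap_relators [(i, False), (j, False)] [(j, False), (i, False)]"
    if "ap_adjacent i j" for i j
    using that by (auto simp: ap_adjacent_def intro: pres_sym)
qed simp_all

text \<open>The coordinates of the coset of a word of \<open>FB\<^sub>7\<close> are the parities of \<open>e\<^sub>5 + e\<^sub>6\<close>,
  \<open>e\<^sub>3 + e\<^sub>4\<close>, \<open>e\<^sub>1 + e\<^sub>2\<close>, \<open>e\<^sub>6\<close> and \<open>e\<^sub>4\<close>, where \<open>e\<^sub>i\<close> is the exponent sum of \<open>\<sigma>\<^sub>i\<close>; the
  stabilizer is the kernel of this homomorphism onto \<open>(\<int>/2)\<^sup>5\<close>. For \<open>A(P\<^sub>4)\<close> the coset is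
  the parity of \<open>e\<^sub>0 + e\<^sub>4\<close>.\<close>

type_synonym fb_coset = "bool \<times> bool \<times> bool \<times> bool \<times> bool"

abbreviation fb_origin :: fb_coset where
  "fb_origin \<equiv> (False, False, False, False, False)"

fun fb_act :: "fb_coset \<Rightarrow> nat \<Rightarrow> fb_coset" where
  "fb_act (b0, b1, b2, b3, b4) i =
    (b0 \<noteq> (i \<in> {5, 6}), b1 \<noteq> (i \<in> {3, 4}), b2 \<noteq> (i \<in> {1, 2}), b3 \<noteq> (i = 6), b4 \<noteq> (i = 4))"

fun fb_transversal :: "fb_coset \<Rightarrow> nat pword" where
  "fb_transversal (b0, b1, b2, b3, b4) =
    (if b3 then [(5, False), (6, False)] else []) @ (if b4 then [(3, False), (4, False)] else []) @
    (if b2 then [(1, False)] else []) @ (if b1 then [(3, False)] else []) @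
    (if b0 then [(5, False)] else [])"

text \<open>\<open>fb_label\<^sub>i c\<close> is the word of \<open>A(P\<^sub>4)\<close> assigned to the Schreier generator of \<open>\<sigma>\<^sub>i\<close>
  at the coset \<open>c\<close>; those of \<open>\<sigma>\<^sub>1\<close>, \<open>\<sigma>\<^sub>3\<close> and \<open>\<sigma>\<^sub>5\<close> are trivial for this transversal.
  Likewise \<open>ap_label c i\<close> is the word of \<open>FB\<^sub>7\<close> assigned to the Schreier generator of
  \<open>v\<^sub>i\<close>.\<close>

fun fb_label2 :: "fb_coset \<Rightarrow> nat pword" where
  "fb_label2 (_, False, False, False, False) = [(1, True)]"
| "fb_label2 (_, True, False, False, False) = [(3, True)]"
| "fb_label2 (_, False, True, False, False) = [(1, False)]"
| "fb_label2 (_, True, True, False, False) = [(3, False)]"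
| "fb_label2 (_, False, False, True, False) = [(1, True)]"
| "fb_label2 (_, True, False, True, False) = [(3, True)]"
| "fb_label2 (_, False, True, True, False) = [(1, False)]"
| "fb_label2 (_, True, True, True, False) = [(3, False)]"
| "fb_label2 (_, False, False, False, True) = [(3, True)]"
| "fb_label2 (_, True, False, False, True) = [(4, False), (0, True), (1, True), (0, False),
      (4, True)]"
| "fb_label2 (_, False, True, False, True) = [(3, False)]"
| "fb_label2 (_, True, True, False, True) = [(4, False), (0, True), (1, False), (0, False),
      (4, True)]"
| "fb_label2 (_, False, False, True, True) = [(3, True)]"
| "fb_label2 (_, True, False, True, True) = [(2, False), (4, True), (4, True), (4, False),
      (0, True), (0, False), (2, False), (0, True), (0, True), (0, True), (1, True), (0, False),
      (0, False), (0, False), (2, True), (0, True), (0, False), (4, True), (4, False), (4, False),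
      (2, True)]"
| "fb_label2 (_, False, True, True, True) = [(3, False)]"
| "fb_label2 (_, True, True, True, True) = [(2, False), (4, True), (4, True), (4, False), (0, True),
      (0, False), (2, False), (0, True), (0, True), (0, True), (1, False), (0, False), (0, False),
      (0, False), (2, True), (0, True), (0, False), (4, True), (4, False), (4, False), (2, True)]"

fun fb_label4 :: "fb_coset \<Rightarrow> nat pword" where
  "fb_label4 (False, False, _, False, False) = [(0, False), (4, True)]"
| "fb_label4 (True, False, _, False, False) = [(0, False), (0, False), (0, False), (2, True),
      (0, True), (0, False), (4, True), (4, False), (4, False), (2, True), (2, False), (4, True),
      (4, True)]"
| "fb_label4 (False, True, _, False, False) = []"
| "fb_label4 (True, True, _, False, False) = [(2, False), (4, True), (4, True)]"
| "fb_label4 (False, False, _, True, False) = [(0, False), (0, False), (0, False), (2, True),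
      (0, True), (0, False), (4, True), (4, False), (4, False), (2, True)]"
| "fb_label4 (True, False, _, True, False) = [(2, False), (0, False), (4, True), (4, False),
      (0, True), (0, False), (2, True), (0, True), (0, False), (4, True), (4, False), (4, False),
      (2, True)]"
| "fb_label4 (False, True, _, True, False) = []"
| "fb_label4 (True, True, _, True, False) = [(2, False), (4, False), (0, True), (0, False),
      (2, True), (0, True), (0, False), (4, True), (4, False), (4, False), (2, True)]"
| "fb_label4 (False, False, _, False, True) = []"
| "fb_label4 (True, False, _, False, True) = [(4, False), (4, False), (2, True)]"
| "fb_label4 (False, True, _, False, True) = [(4, False), (0, True)]"
| "fb_label4 (True, True, _, False, True) = [(4, False), (4, False), (2, True), (2, False),
      (4, True), (4, True), (4, False), (0, True), (0, False), (2, False), (0, True), (0, True),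
      (0, True)]"
| "fb_label4 (False, False, _, True, True) = []"
| "fb_label4 (True, False, _, True, True) = [(2, False), (4, True), (4, True), (4, False),
      (0, True), (0, False), (2, False), (0, True), (0, False), (4, True), (2, True)]"
| "fb_label4 (False, True, _, True, True) = [(2, False), (4, True), (4, True), (4, False),
      (0, True), (0, False), (2, False), (0, True), (0, True), (0, True)]"
| "fb_label4 (True, True, _, True, True) = [(2, False), (4, True), (4, True), (4, False), (0, True),
      (0, False), (2, False), (0, True), (0, False), (4, True), (4, False), (0, True), (2, True)]"

fun fb_label6 :: "fb_coset \<Rightarrow> nat pword" where
  "fb_label6 (False, _, _, False, False) = [(2, True)]"
| "fb_label6 (True, _, _, False, False) = []"
| "fb_label6 (False, _, _, True, False) = []"
| "fb_label6 (True, _, _, True, False) = [(2, False)]"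
| "fb_label6 (False, _, _, False, True) = [(4, False), (0, True), (0, False), (2, True), (0, True),
      (0, False), (4, True), (4, False), (4, False), (2, True)]"
| "fb_label6 (True, _, _, False, True) = [(4, False), (4, False), (2, True)]"
| "fb_label6 (False, _, _, True, True) = [(2, False), (4, True), (4, True)]"
| "fb_label6 (True, _, _, True, True) = [(2, False), (4, True), (4, True), (4, False), (0, True),
      (0, False), (2, False), (0, True), (0, False), (4, True)]"

definition fb_label :: "fb_coset \<Rightarrow> nat \<Rightarrow> nat pword" where
  "fb_label c i =
    (if i = 2 then fb_label2 c
     else if i = 4 then fb_label4 c
     else if i = 6 then fb_label6 c
     else [])"

definition ap_act :: "bool \<Rightarrow> nat \<Rightarrow> bool" where
  "ap_act b i \<longleftrightarrow> b \<noteq> (i \<in> {0, 4})"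

definition ap_transversal :: "bool \<Rightarrow> nat pword" where
  "ap_transversal b = (if b then [(0, False)] else [])"

fun ap_label :: "bool \<Rightarrow> nat \<Rightarrow> nat pword" where
  "ap_label False i = [
    [],
    [(1, False), (2, False)],
    [(5, False), (6, False), (5, False), (6, False)],
    [(3, False), (4, False), (1, False), (2, False), (4, True), (3, True)],
    [(3, False), (4, False), (3, False), (4, False)]] ! i"
| "ap_label True i = [
    [(5, False), (6, False), (4, True), (3, True), (5, False), (6, False), (3, False), (4, False)],
    [(1, False), (2, False)],
    [(4, True), (3, True), (5, False), (6, False), (5, False), (6, False), (3, False), (4, False)],
    [(4, True), (3, True), (1, False), (2, False), (3, False), (4, False)],
    [(4, True), (3, True), (5, False), (6, False), (4, True), (3, True), (5, False), (6, False)]] ! i"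

lemma coset_table_fb: "coset_table UNIV fb_origin fb_act"
  by standard auto

lemma coset_table_ap: "coset_table UNIV False ap_act"
  by standard (auto simp: ap_act_def)

lemma fb_generators_eq: "{1..6} = {1, 2, 3, 4, 5, 6 :: nat}"
  by auto

lemma ap_generators_eq: "{0..4} = {0, 1, 2, 3, 4 :: nat}"
  by auto

lemmas evaluation_simps = all_bool_eq fb_label_def ap_act_def ap_transversal_def
  schreier_rewrite_letter_def reduce_word_def commuting_letters_def cancelling_letters_def
  fb_far_apart_def ap_adjacent_def

lemma fb_labels_by_evaluation:
  "\<forall>c. \<forall>g\<in>{1..6}.
    fb_label c g \<in> gen_words {0..4} \<and> scan ap_act False (fb_label c g) = False \<and>
    fb_reduce (schreier_rewrite ap_act ap_label False (fb_label c g) @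
      inv_pword (fb_transversal c @ [(g, False)] @ inv_pword (fb_transversal (fb_act c g)))) = []"
  unfolding fb_generators_eq by (simp add: evaluation_simps)

lemma ap_labels_by_evaluation:
  "\<forall>c. \<forall>g\<in>{0..4}.
    ap_label c g \<in> gen_words {1..6} \<and>
    scan fb_act fb_origin (ap_label c g) = fb_origin \<and>
    ap_reduce (schreier_rewrite fb_act fb_label fb_origin (ap_label c g) @
      inv_pword (ap_transversal c @ [(g, False)] @ inv_pword (ap_transversal (ap_act c g)))) = []"
  unfolding ap_generators_eq by (simp add: evaluation_simps)

lemma fb_relators_by_evaluation:
  "\<forall>c. \<forall>i\<in>{1, 2, 3, 4, 5, 6}.
    scan fb_act c [(i, False), (i, False)] = c \<and>
    ap_reduce (schreier_rewrite fb_act fb_label c [(i, False), (i, False)]) = [] \<and>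
    (\<forall>j\<in>{1, 2, 3, 4, 5, 6}. i + 2 \<le> j \<or> j + 2 \<le> i \<longrightarrow>
      scan fb_act c (commutator_word i j) = c \<and>
      ap_reduce (schreier_rewrite fb_act fb_label c (commutator_word i j)) = [])"
  by (simp add: evaluation_simps commutator_word_def)

lemma ap_relators_by_evaluation:
  "\<forall>c. \<forall>i\<in>{0, 1, 2, 3}.
    scan ap_act c (commutator_word i (i + 1)) = c \<and>
    fb_reduce (schreier_rewrite ap_act ap_label c (commutator_word i (i + 1))) = []"
  by (simp add: evaluation_simps commutator_word_def)

lemma fb_relators_rewrite_trivially:
  assumes "r \<in> fb_relators"
  shows "scan fb_act c r = c \<and> pres_eq ap_relators (schreier_rewrite fb_act fb_label c r) []"
proof -
  from assms consider i where "i \<in> {1, 2, 3, 4, 5, 6}" "r = [(i, False), (i, False)]"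
    | i j where "i \<in> {1, 2, 3, 4, 5, 6}" "j \<in> {1, 2, 3, 4, 5, 6}" "i + 2 \<le> j \<or> j + 2 \<le> i"
      "r = commutator_word i j"
    unfolding fb_relators_def fb_generators_eq by blast
  then have "scan fb_act c r = c \<and> ap_reduce (schreier_rewrite fb_act fb_label c r) = []"
    using fb_relators_by_evaluation by cases blast+
  then show ?thesis
    using pres_eq_ap_of_reduce [of _ "[]"] by simp
qed

lemma ap_relators_rewrite_trivially:
  assumes "r \<in> ap_relators"
  shows "scan ap_act c r = c \<and> pres_eq fb_relators (schreier_rewrite ap_act ap_label c r) []"
proof -
  have "{0..3} = {0, 1, 2, 3 :: nat}"
    by auto
  with assms obtain i where "i \<in> {0, 1, 2, 3}" "r = commutator_word i (i + 1)"
    unfolding ap_relators_def by auto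
  then have "scan ap_act c r = c \<and> fb_reduce (schreier_rewrite ap_act ap_label c r) = []"
    using ap_relators_by_evaluation by blast
  then show ?thesis
    using pres_eq_fb_of_reduce [of _ "[]"] by simp
qed

lemma commensurability_certificate_FB7_AP4:
  "commensurability_certificate UNIV fb_origin fb_act UNIV False ap_act
    {1..6} fb_relators fb_label fb_transversal {0..4} ap_relators ap_label ap_transversal"
proof -
  interpret fb: coset_table UNIV "fb_origin" fb_act
    by (rule coset_table_fb)
  interpret ap: coset_table UNIV False ap_act
    by (rule coset_table_ap)
  show ?thesis
  proof
    fix c :: fb_coset and g :: nat
    assume "g \<in> {1..6}"
    then show "fb_label c g \<in> gen_words {0..4}" and "scan ap_act False (fb_label c g) = False"
      and "pres_eq fb_relators (schreier_rewrite ap_act ap_label False (fb_label c g))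
        (fb_transversal c @ [(g, False)] @ inv_pword (fb_transversal (fb_act c g)))"
      using fb_labels_by_evaluation [rule_format, of g c] by (simp_all add: pres_eq_fb_of_reduce)
  next
    fix c :: bool and g :: nat
    assume "g \<in> {0..4}"
    then show "ap_label c g \<in> gen_words {1..6}"
      and "scan fb_act fb_origin (ap_label c g) = fb_origin"
      and "pres_eq ap_relators (schreier_rewrite fb_act fb_label fb_origin (ap_label c g))
        (ap_transversal c @ [(g, False)] @ inv_pword (ap_transversal (ap_act c g)))"
      using ap_labels_by_evaluation [rule_format, of g c] by (simp_all add: pres_eq_ap_of_reduce)
  qed (simp_all add: fb_relators_rewrite_trivially ap_relators_rewrite_trivially ap_transversal_def)
qed

theorem theorem1p6:
  shows "commensurable FB7 AP4"
  unfolding FB7_eq AP4_eq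
  by (rule commensurability_certificate.commensurable_pres_groups
      [OF commensurability_certificate_FB7_AP4])

end
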